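(* Under the standing setting below, let $Y\in L^1_{\tilde P}(\tilde\Omega)$. Then for every $k=1,\dots,N$ and $t\ge0$, $$\mathbf 1_{\{\tau_k\le t\}}\,\mathbb E^{\tilde P}\big[Y\mid\mathcal F_t\vee\mathcal H^1_t\vee\cdots\vee\mathcal H^k_t\big]=\mathbf 1_{\{\tau_k\le t\}}\,\mathbb E^{\tilde P}\big[Y\mid\mathcal F_t\vee\sigma(E_1)\vee\cdots\vee\sigma(E_k)\big]\quad\tilde P\text{-a.s.}$$
   Context: Single-prior setting. Let $(\Omega,\mathcal F,P)$ be a probability space, $\Omega$ Polish, $\mathcal F=\mathcal B(\Omega)$, with a filtration $\mathbb F=(\mathcal F_t)_{t\ge0}$ (not assumed to satisfy the usual conditions), $\mathcal F_\infty=\bigvee_{t}\mathcal F_t$. Let $(\hat\Omega,\mathcal B(\hat\Omega),\hat P)$ be a probability space ($\hat\Omega$ Polish) carrying random variables $E_1,\dots,E_N$ which are i.i.d. unit-exponentially distributed under $\hat P$. Set $(\tilde\Omega,\mathcal G,\tilde P)=(\Omega\times\hat\Omega,\mathcal B(\Omega)\otimes\mathcal B(\hat\Omega),P\otimes\hat P)$, write $\tilde\omega=(\omega,\hat\omega)$, and identify functions and sub-$\sigma$-algebras on one factor with their natural extensions to $\tilde\Omega$ (e.g. $X(\omega,\hat\omega)=X(\omega)$, $\mathcal A\equiv\mathcal A\otimes\{\emptyset,\hat\Omega\}$); in particular the $E_n$ are independent of $\mathcal F_\infty$ under $\tilde P$. Let $\tilde\lambda^1,\dots,\tilde\lambda^N$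 be nonnegative, measurable, $\mathbb F$-adapted processes on $\Omega$ with $\int_0^t\tilde\lambda^n_s ds<\infty$ for all $t<\infty$ and $\int_0^\infty\tilde\lambda^n_sds=+\infty$, $P$-a.s. Define $\tilde\tau_n=\inf\{t>0:\int_0^t\tilde\lambda^n_sds\ge E_n\}$, $\tau_n=\sum_{k=1}^n\tilde\tau_k$, $\tau_0=0$, $\tau_{N+1}=+\infty$, $\boldsymbol\tau=(\tau_1,\dots,\tau_N)$, $\boldsymbol\tau_{(k)}=(\tau_1,\dots,\tau_k)$; for a vector $\mathbf u$, $\mathbf u_{(k)}$ denotes its first $k$ entries. Let $\mathbb H^n=(\mathcal H^n_t)_{t\ge0}$ be the filtration generated by $(\mathbf 1_{\{\tau_n\le t\}})_{t\ge0}$, $\mathbb G^{(0)}=\mathbb F$, $\mathcal G^{(n)}_t=\mathcal F_t\vee\mathcal H^1_t\vee\cdots\vee\mathcal H^n_t$, $\mathcal G^{(n)}_\infty=\bigvee_t\mathcal G^{(n)}_t$. $L^1_{\tilde P}(\tilde\Omega)$ is the set of real random variables on $\tilde\Omega$ measurable w.r.t. $\mathcal G\vee\mathcal N^P_\infty$ ($\mathcal N^P_\infty$ = the $(P,\mathcal F_\infty)$-null sets) with $\mathbb E^{\tilde P}|X|<\infty$. For measurable $X$ on $\tilde\Omega$, $\mathbb E^{\hat P}[X](\omega):=\int_{\hat\Omega}X(\omega,\hat\omega)\hat P(d\hat\omega)$. *)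

theory Defs
  imports "HOL-Probability.Probability"
begin

definition tau_tilde ::
  "(nat \<Rightarrow> real \<Rightarrow> 'a \<Rightarrow> real) \<Rightarrow> (nat \<Rightarrow> 'b \<Rightarrow> real) \<Rightarrow> nat \<Rightarrow> 'a \<times> 'b \<Rightarrow> real" where
  "tau_tilde lam E n = (\<lambda>(w, w').
     Inf {t. 0 < t \<and> ennreal (E n w') \<le> (\<integral>\<^sup>+ s\<in>{0..t}. ennreal (lam n s w) \<partial>lborel)})"

definition tau ::
  "(nat \<Rightarrow> real \<Rightarrow> 'a \<Rightarrow> real) \<Rightarrow> (nat \<Rightarrow> 'b \<Rightarrow> real) \<Rightarrow> nat \<Rightarrow> 'a \<times> 'b \<Rightarrow> real" where
  "tau lam E n x = (\<Sum>j\<in>{1..n}. tau_tilde lam E j x)"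

definition F_infty :: "'a measure \<Rightarrow> (real \<Rightarrow> 'a measure) \<Rightarrow> 'a set set" where
  "F_infty P F = sigma_sets (space P) (\<Union>t\<in>{0..}. sets (F t))"

definition GN_measure :: "'a measure \<Rightarrow> 'b measure \<Rightarrow> (real \<Rightarrow> 'a measure) \<Rightarrow> ('a \<times> 'b) measure" where
  "GN_measure P Q F = sigma (space P \<times> space Q)
     (sets (P \<Otimes>\<^sub>M Q) \<union>
      {A \<times> space Q | A. \<exists>B\<in>F_infty P F. A \<subseteq> B \<and> emeasure P B = 0})"

definition G_sigma ::
  "'a measure \<Rightarrow> 'b measure \<Rightarrow> (real \<Rightarrow> 'a measure) \<Rightarrow> (nat \<Rightarrow> real \<Rightarrow> 'a \<Rightarrow> real)
   \<Rightarrow> (nat \<Rightarrow> 'b \<Rightarrow> real) \<Rightarrow> nat \<Rightarrow> real \<Rightarrow> ('a \<times> 'b) measure" where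
  "G_sigma P Q F lam E k t = sigma (space P \<times> space Q)
     ({A \<times> space Q | A. A \<in> sets (F t)} \<union>
      {{x \<in> space P \<times> space Q. tau lam E n x \<le> s} | n s. n \<in> {1..k} \<and> 0 \<le> s \<and> s \<le> t})"

definition FE_sigma ::
  "'a measure \<Rightarrow> 'b measure \<Rightarrow> (real \<Rightarrow> 'a measure)
   \<Rightarrow> (nat \<Rightarrow> 'b \<Rightarrow> real) \<Rightarrow> nat \<Rightarrow> real \<Rightarrow> ('a \<times> 'b) measure" where
  "FE_sigma P Q F E k t = sigma (space P \<times> space Q)
     ({A \<times> space Q | A. A \<in> sets (F t)} \<union>
      {space P \<times> {w' \<in> space Q. E n w' \<in> B} | n B. n \<in> {1..k} \<and> B \<in> sets borel})"

end

theory Submission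
  imports Defs
begin

text \<open>Conditional expectations with respect to two \<open>\<sigma>\<close>-algebras that contain a common event \<open>A\<close>
  (up to a null set) and have the same trace on \<open>A\<close> modulo null sets agree on \<open>A\<close>. On
  \<open>{\<tau>\<^sub>k \<le> t}\<close> the traces of \<open>F\<^sub>t \<or> H\<^sup>1\<^sub>t \<or> ... \<or> H\<^sup>k\<^sub>t\<close> and of
  \<open>F\<^sub>t \<or> \<sigma>(E\<^sub>1, ..., E\<^sub>k)\<close> coincide: with the cumulative intensity
  \<open>\<Lambda>\<^sub>n(s) = \<integral>\<^sub>0\<^sup>s \<lambda>\<^sup>n\<close>, which has an \<open>F\<^sub>t\<close>-measurable version for \<open>s \<le> t\<close>, one has
  \<open>\<tau>'\<^sub>n \<le> s\<close> iff \<open>E\<^sub>n \<le> \<Lambda>\<^sub>n(s)\<close>, which expresses the \<open>H\<close>-events through \<open>E\<^sub>n\<close>; conversely, on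
  \<open>{\<tau>'\<^sub>n \<le> t}\<close>, \<open>E\<^sub>n = \<Lambda>\<^sub>n(\<tau>'\<^sub>n)\<close> is determined by \<open>\<tau>'\<^sub>n = \<tau>\<^sub>n - \<tau>\<^sub>n\<^sub>-\<^sub>1\<close> and the values of \<open>\<Lambda>\<^sub>n\<close>
  at the rationals below \<open>\<tau>'\<^sub>n\<close>.\<close>

text \<open>\<open>S \<subseteq> ae_trace_closure M A S'\<close> is the inclusion of the traces of \<open>S\<close> and \<open>S'\<close> on \<open>A\<close>,
  modulo \<open>M\<close>-null sets.\<close>
definition ae_trace_closure :: "'a measure \<Rightarrow> 'a set \<Rightarrow> 'a set set \<Rightarrow> 'a set set" where
  "ae_trace_closure M A S =
     {C. C \<subseteq> space M \<and> (\<exists>B\<in>S. AE x\<in>A in M. x \<in> C \<longleftrightarrow> x \<in> B)}"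

lemma ae_trace_closureI:
  "C \<subseteq> space M \<Longrightarrow> B \<in> S \<Longrightarrow> (AE x in M. x \<in> A \<longrightarrow> (x \<in> C \<longleftrightarrow> x \<in> B)) \<Longrightarrow>
    C \<in> ae_trace_closure M A S"
  unfolding ae_trace_closure_def by blast

lemma subset_ae_trace_closure: "S \<subseteq> Pow (space M) \<Longrightarrow> S \<subseteq> ae_trace_closure M A S"
  unfolding ae_trace_closure_def by auto

lemma ae_trace_closure_AE_cong:
  assumes "C' \<in> ae_trace_closure M A S"
    and "AE x in M. x \<in> A \<longrightarrow> (x \<in> C \<longleftrightarrow> x \<in> C')" and "C \<subseteq> space M"
  shows "C \<in> ae_trace_closure M A S"
proof -
  obtain B where B: "B \<in> S" "AE x in M. x \<in> A \<longrightarrow> (x \<in> C' \<longleftrightarrow> x \<in> B)"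
    using assms(1) unfolding ae_trace_closure_def by blast
  have "AE x in M. x \<in> A \<longrightarrow> (x \<in> C \<longleftrightarrow> x \<in> B)"
    using assms(2) B(2) by eventually_elim blast
  then show ?thesis by (rule ae_trace_closureI[OF assms(3) B(1)])
qed

lemma ae_trace_closure_antimono:
  assumes "A \<subseteq> A'" shows "ae_trace_closure M A' S \<subseteq> ae_trace_closure M A S"
proof
  fix C assume "C \<in> ae_trace_closure M A' S"
  then obtain B where "C \<subseteq> space M" "B \<in> S" "AE x in M. x \<in> A' \<longrightarrow> (x \<in> C \<longleftrightarrow> x \<in> B)"
    unfolding ae_trace_closure_def by blast
  then show "C \<in> ae_trace_closure M A S"
    using assms by (intro ae_trace_closureI) (auto elim!: eventually_mono)
qed

lemma ae_trace_closure_cong: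
  assumes "AE x in M. x \<in> A \<longleftrightarrow> x \<in> A'"
  shows "ae_trace_closure M A S = ae_trace_closure M A' S"
proof -
  have "(AE x in M. x \<in> A \<longrightarrow> P x) \<longleftrightarrow> (AE x in M. x \<in> A' \<longrightarrow> P x)" for P
  proof
    assume "AE x in M. x \<in> A \<longrightarrow> P x"
    with assms show "AE x in M. x \<in> A' \<longrightarrow> P x" by eventually_elim blast
  next
    assume "AE x in M. x \<in> A' \<longrightarrow> P x"
    with assms show "AE x in M. x \<in> A \<longrightarrow> P x" by eventually_elim blast
  qed
  then show ?thesis unfolding ae_trace_closure_def by simp
qed

lemma sigma_algebra_ae_trace_closure:
  assumes S: "sigma_algebra (space M) S"
  shows "sigma_algebra (space M) (ae_trace_closure M A S)"
  unfolding sigma_algebra_iff2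
proof (intro conjI allI ballI impI)
  show "ae_trace_closure M A S \<subseteq> Pow (space M)"
    unfolding ae_trace_closure_def by auto
  show "{} \<in> ae_trace_closure M A S"
    using S by (intro ae_trace_closureI[of _ _ "{}"]) (auto simp: sigma_algebra_iff2)
next
  fix C assume "C \<in> ae_trace_closure M A S"
  then obtain B where "B \<in> S" "AE x in M. x \<in> A \<longrightarrow> (x \<in> C \<longleftrightarrow> x \<in> B)"
    unfolding ae_trace_closure_def by blast
  with S show "space M - C \<in> ae_trace_closure M A S"
    by (intro ae_trace_closureI[of _ _ "space M - B"])
       (auto simp: sigma_algebra_iff2 elim!: eventually_mono)
next
  fix C :: "nat \<Rightarrow> _" assume "range C \<subseteq> ae_trace_closure M A S"
  then have "\<forall>i. \<exists>B\<in>S. AE x in M. x \<in> A \<longrightarrow> (x \<in> C i \<longleftrightarrow> x \<in> B)"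
    unfolding ae_trace_closure_def by auto
  then obtain B where B: "\<And>i. B i \<in> S" "\<And>i. AE x in M. x \<in> A \<longrightarrow> (x \<in> C i \<longleftrightarrow> x \<in> B i)"
    by metis
  have "AE x in M. \<forall>i. x \<in> A \<longrightarrow> (x \<in> C i \<longleftrightarrow> x \<in> B i)"
    using B(2) by (intro AE_all_countable[THEN iffD2] allI)
  then have "AE x in M. x \<in> A \<longrightarrow> (x \<in> (\<Union>i. C i) \<longleftrightarrow> x \<in> (\<Union>i. B i))"
    by (rule AE_mp) (auto intro!: AE_I2)
  moreover have "(\<Union>i. B i) \<in> S" using S B(1) unfolding sigma_algebra_iff2 by blast
  moreover have "(\<Union>i. C i) \<subseteq> space M"
    using \<open>range C \<subseteq> _\<close> unfolding ae_trace_closure_def by auto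
  ultimately show "(\<Union>i. C i) \<in> ae_trace_closure M A S"
    by (intro ae_trace_closureI)
qed

lemma sigma_sets_subset_ae_trace_closure:
  "sigma_algebra (space M) S \<Longrightarrow> G \<subseteq> ae_trace_closure M A S \<Longrightarrow>
    sigma_sets (space M) G \<subseteq> ae_trace_closure M A S"
  by (rule sigma_algebra.sigma_sets_subset[OF sigma_algebra_ae_trace_closure])

lemma sets_sigma_ae_trace_closure:
  assumes "sigma_algebra (space M) S"
  shows "sets (sigma (space M) (ae_trace_closure M A S)) = ae_trace_closure M A S"
proof -
  have "ae_trace_closure M A S \<subseteq> Pow (space M)" unfolding ae_trace_closure_def by auto
  then show ?thesis
    by (simp add: sets_measure_of sigma_algebra.sigma_sets_eq[OF sigma_algebra_ae_trace_closure[OF assms]])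
qed

lemma real_cond_exp_indicator_mult_on_trace:
  assumes M: "finite_measure M"
    and K: "subalgebra M K" and G: "subalgebra M G" and GK: "subalgebra K G"
    and A: "A \<in> sets G" and K_trace: "sets K \<subseteq> ae_trace_closure M A (sets G)"
    and Y: "integrable M Y"
  shows "AE x in M. real_cond_exp M K (\<lambda>x. indicator A x * Y x) x
     = indicator A x * real_cond_exp M G Y x"
proof -
  interpret finite_measure M by fact
  interpret K: finite_measure_subalgebra M K by unfold_locales (rule K)
  interpret G: finite_measure_subalgebra M G by unfold_locales (rule G)
  have AM[measurable]: "A \<in> sets M" using A G unfolding subalgebra_def by auto
  have [measurable]: "Y \<in> borel_measurable M" using Y by auto
  define f where "f x = indicator A x * real_cond_exp M G Y x" for x
  have "f \<in> borel_measurable G" unfolding f_def using A by measurable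
  then have fK: "f \<in> borel_measurable K" by (rule measurable_from_subalg[OF GK])
  have fint: "integrable M f"
    unfolding f_def using integrable_mult_indicator[OF AM G.real_cond_exp_int(1)[OF Y]] by simp
  have AYint: "integrable M (\<lambda>x. indicator A x * Y x)"
    using integrable_mult_indicator[OF AM Y] by simp
  show ?thesis unfolding f_def[symmetric]
  proof (rule K.real_cond_exp_charact[OF _ AYint fint fK])
    fix C assume "C \<in> sets K"
    then obtain B where B: "B \<in> sets G" "AE x in M. x \<in> A \<longrightarrow> (x \<in> C \<longleftrightarrow> x \<in> B)"
      using K_trace unfolding ae_trace_closure_def by blast
    have [measurable]: "C \<in> sets M" "B \<in> sets M"
      using \<open>C \<in> sets K\<close> K B(1) G unfolding subalgebra_def by auto
    have ae: "AE x in M. indicator C x * indicator A x = (indicator (B \<inter> A) x :: real)"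
      using B(2) by eventually_elim (auto simp: indicator_def)
    have "(\<integral>x\<in>C. indicator A x * Y x \<partial>M) = (\<integral>x\<in>B \<inter> A. Y x \<partial>M)"
      unfolding set_lebesgue_integral_def
      by (rule integral_cong_AE) (use ae in \<open>auto elim!: eventually_mono simp: mult.assoc[symmetric]\<close>)
    also have "\<dots> = (\<integral>x\<in>B \<inter> A. real_cond_exp M G Y x \<partial>M)"
      using B(1) A by (intro G.real_cond_exp_intA[OF Y]) auto
    also have "\<dots> = (\<integral>x\<in>C. f x \<partial>M)"
      unfolding set_lebesgue_integral_def f_def
      by (rule integral_cong_AE) (use ae in \<open>auto elim!: eventually_mono simp: mult.assoc[symmetric]\<close>)
    finally show "(\<integral>x\<in>C. indicator A x * Y x \<partial>M) = (\<integral>x\<in>C. f x \<partial>M)" .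
  qed
qed

lemma real_cond_exp_eq_on_trace:
  assumes M: "finite_measure M"
    and G: "subalgebra M G" and H: "subalgebra M H"
    and A: "A \<in> sets G" and HG: "sets H \<subseteq> ae_trace_closure M A (sets G)"
    and Y: "integrable M Y"
  shows "AE x in M. indicator A x * real_cond_exp M G Y x
     = indicator A x * real_cond_exp M (sigma (space M) (sets G \<union> sets H)) Y x"
proof -
  define K where "K = sigma (space M) (sets G \<union> sets H)"
  have GM: "sets G \<subseteq> sets M" "sets H \<subseteq> sets M" and sG: "space G = space M"
    using G H unfolding subalgebra_def by auto
  have "sets G \<union> sets H \<subseteq> Pow (space M)" using GM sets.space_closed[of M] by auto
  then have sK: "space K = space M" "sets K = sigma_sets (space M) (sets G \<union> sets H)"
    unfolding K_def by (simp_all add: space_measure_of sets_measure_of)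
  have K: "subalgebra M K"
    unfolding subalgebra_def sK using GM sets.sigma_sets_subset[of "sets G \<union> sets H" M] by auto
  have GK: "subalgebra K G" unfolding subalgebra_def sK sG by auto
  have sigG: "sigma_algebra (space M) (sets G)" using sets.sigma_algebra_axioms[of G] sG by simp
  have K_trace: "sets K \<subseteq> ae_trace_closure M A (sets G)"
    unfolding sK using subset_ae_trace_closure[of "sets G" M A] HG sets.space_closed[of G] sG
    by (intro sigma_sets_subset_ae_trace_closure[OF sigG]) auto
  interpret K: finite_measure_subalgebra M K using M K by (simp add: finite_measure_subalgebra_def
      finite_measure_subalgebra_axioms_def)
  have AK: "A \<in> sets K" using A unfolding sK by auto
  have "AE x in M. real_cond_exp M K (\<lambda>x. indicator A x * Y x) x = indicator A x * real_cond_exp M K Y x"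
    using AK A GM integrable_mult_indicator[OF _ Y, of A] Y
    by (intro K.real_cond_exp_mult) auto
  with real_cond_exp_indicator_mult_on_trace[OF M K G GK A K_trace Y]
  show ?thesis unfolding K_def by eventually_elim metis
qed

lemma real_cond_exp_eq_on_common_trace:
  assumes M: "finite_measure M"
    and G: "subalgebra M G" and H: "subalgebra M H"
    and A: "A \<in> sets G" and A': "A' \<in> sets H" and AA': "AE x in M. x \<in> A \<longleftrightarrow> x \<in> A'"
    and HG: "sets H \<subseteq> ae_trace_closure M A (sets G)"
    and GH: "sets G \<subseteq> ae_trace_closure M A (sets H)"
    and Y: "integrable M Y"
  shows "AE x in M. indicator A x * real_cond_exp M G Y x = indicator A x * real_cond_exp M H Y x"
proof -
  have "AE x in M. indicator A' x * real_cond_exp M H Y x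
     = indicator A' x * real_cond_exp M (sigma (space M) (sets H \<union> sets G)) Y x"
    using GH ae_trace_closure_cong[OF AA']
    by (intro real_cond_exp_eq_on_trace[OF M H G A' _ Y]) simp
  moreover have "AE x in M. indicator A x * real_cond_exp M G Y x
     = indicator A x * real_cond_exp M (sigma (space M) (sets G \<union> sets H)) Y x"
    by (rule real_cond_exp_eq_on_trace[OF M G H A HG Y])
  ultimately show ?thesis
    using AA' by eventually_elim (simp add: Un_commute indicator_def)
qed

definition crossing_time :: "(real \<Rightarrow> ennreal) \<Rightarrow> real \<Rightarrow> real" where
  "crossing_time V e = Inf {t. 0 < t \<and> ennreal e \<le> V t}"

locale level_crossing =
  fixes V :: "real \<Rightarrow> ennreal" and e :: real
  assumes mono: "\<And>a b. a \<le> b \<Longrightarrow> V a \<le> V b"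
    and at_0: "V 0 = 0"
    and right_cont: "\<And>r. 0 \<le> r \<Longrightarrow> V r = (INF n. V (r + 1 / Suc n))"
    and left_cont: "\<And>r. 0 < r \<Longrightarrow> V r = (SUP n. V (r - r / Suc (Suc n)))"
    and unbounded: "\<exists>r. ennreal e < V r"
    and level_pos: "0 < e"
begin

abbreviation "T \<equiv> crossing_time V e"

lemma crossing_set_nonempty: "{t. 0 < t \<and> ennreal e \<le> V t} \<noteq> {}"
proof -
  obtain r where r: "ennreal e < V r" using unbounded by blast
  have "0 < r"
  proof (rule ccontr)
    assume "\<not> 0 < r" then have "V r \<le> V 0" using mono by simp
    with r at_0 show False by simp
  qed
  then show ?thesis using r by (auto intro!: exI[of _ r] less_imp_le)
qed

lemma bdd_below_crossing_set: "bdd_below {t. 0 < t \<and> ennreal e \<le> V t}"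
  by (rule bdd_belowI[of _ 0]) auto

lemma crossing_time_pos: "0 < T"
proof -
  have "(INF n. V (0 + 1 / Suc n)) < ennreal e" using right_cont[of 0] at_0 level_pos by simp
  then obtain n where n: "V (1 / Suc n) < ennreal e" by (auto simp: INF_less_iff)
  have "1 / Suc n \<le> T" unfolding crossing_time_def
  proof (rule cInf_greatest[OF crossing_set_nonempty])
    fix t assume "t \<in> {t. 0 < t \<and> ennreal e \<le> V t}"
    then have "ennreal e \<le> V t" by simp
    with n mono[of t "1 / Suc n"] show "1 / Suc n \<le> t" by (cases "t \<le> 1 / Suc n") auto
  qed
  then show ?thesis by (rule less_le_trans[rotated]) simp
qed

lemma level_le_V_crossing_time: "ennreal e \<le> V T"
proof -
  have "ennreal e \<le> V (T + 1 / Suc m)" for m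
  proof -
    have "Inf {t. 0 < t \<and> ennreal e \<le> V t} < T + 1 / Suc m"
      unfolding crossing_time_def by simp
    then obtain t where "0 < t" "ennreal e \<le> V t" "t < T + 1 / Suc m"
      using cInf_less_iff[OF crossing_set_nonempty bdd_below_crossing_set] by auto
    then show ?thesis using mono[of t "T + 1 / Suc m"] by simp
  qed
  then have "ennreal e \<le> (INF m. V (T + 1 / Suc m))" by (auto intro: INF_greatest)
  then show ?thesis using right_cont[of T] crossing_time_pos by simp
qed

lemma crossing_time_le_iff: "0 \<le> s \<Longrightarrow> T \<le> s \<longleftrightarrow> ennreal e \<le> V s"
proof
  assume "T \<le> s"
  then show "ennreal e \<le> V s" using level_le_V_crossing_time mono[of T s] by simp
next
  assume "0 \<le> s" "ennreal e \<le> V s"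
  moreover have "s \<noteq> 0" using \<open>ennreal e \<le> V s\<close> at_0 level_pos by auto
  ultimately show "T \<le> s"
    unfolding crossing_time_def by (intro cInf_lower[OF _ bdd_below_crossing_set]) auto
qed

lemma V_before_crossing_time_le:
  assumes "\<And>m. V (T - T / Suc (Suc m)) \<le> ennreal c"
  shows "V T \<le> ennreal c"
  using left_cont[OF crossing_time_pos] assms by (auto intro: SUP_least)

lemma V_crossing_time: "V T = ennreal e"
proof (rule antisym[OF V_before_crossing_time_le level_le_V_crossing_time])
  fix m :: nat
  have "0 \<le> T - T / Suc (Suc m)"
    "T - T / Suc (Suc m) < T"
    using crossing_time_pos by (auto simp: field_simps)
  then show "V (T - T / Suc (Suc m)) \<le> ennreal e"
    using crossing_time_le_iff by (auto simp: not_le[symmetric])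
qed

text \<open>Quantifying over rationals only keeps the characterization countable, hence measurable.\<close>

lemma level_le_iff_rational:
  "e \<le> c \<longleftrightarrow> (\<forall>q\<in>\<rat>. 0 \<le> q \<and> q < T \<longrightarrow> V q \<le> ennreal c)"
proof
  assume "e \<le> c"
  then show "\<forall>q\<in>\<rat>. 0 \<le> q \<and> q < T \<longrightarrow> V q \<le> ennreal c"
  proof (intro ballI impI)
    fix q assume "0 \<le> q \<and> q < T"
    then have "V q \<le> V T" using mono by simp
    then show "V q \<le> ennreal c" using V_crossing_time \<open>e \<le> c\<close> by (metis ennreal_leI order_trans)
  qed
next
  assume H: "\<forall>q\<in>\<rat>. 0 \<le> q \<and> q < T \<longrightarrow> V q \<le> ennreal c"
  have "V (T - T / Suc (Suc m)) \<le> ennreal c" for m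
  proof -
    have "0 \<le> T - T / Suc (Suc m)"
      "T - T / Suc (Suc m) < T"
      using crossing_time_pos by (auto simp: field_simps)
    moreover obtain q where "q \<in> \<rat>" "T - T / Suc (Suc m) < q"
      "q < T"
      using Rats_dense_in_real calculation(2) by blast
    ultimately show ?thesis using H mono[of "T - T / Suc (Suc m)" q]
      by force
  qed
  then have "ennreal e \<le> ennreal c"
    using V_before_crossing_time_le V_crossing_time by simp
  then show "e \<le> c"
    using level_pos by (cases "0 \<le> c") (auto simp: ennreal_neg)
qed

end

lemma nn_integral_Icc_right_continuous:
  fixes g :: "real \<Rightarrow> real"
  assumes g[measurable]: "g \<in> borel_measurable borel"
    and "0 \<le> r" and fin: "(\<integral>\<^sup>+ s\<in>{0..r + 1}. ennreal (g s) \<partial>lborel) < \<infinity>"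
  shows "(\<integral>\<^sup>+ s\<in>{0..r}. ennreal (g s) \<partial>lborel)
    = (INF n. \<integral>\<^sup>+ s\<in>{0..r + 1 / Suc n}. ennreal (g s) \<partial>lborel)"
proof -
  let ?f = "\<lambda>n s. ennreal (g s) * indicator {0..r + 1 / Suc n} s"
  have dec: "decseq ?f"
  proof (rule decseq_SucI, rule le_funI)
    fix n s
    have "r + 1 / Suc (Suc n) \<le> r + 1 / Suc n" by (simp add: frac_le)
    then show "?f (Suc n) s \<le> ?f n s" by (auto simp: indicator_def)
  qed
  have "(INF n. ?f n s) = ennreal (g s) * indicator {0..r} s" for s
  proof (cases "0 \<le> s \<and> r < s")
    case True
    then obtain n where "inverse (real (Suc n)) < s - r" using reals_Archimedean[of "s - r"] by auto
    then have "r + 1 / Suc n < s" by (simp add: inverse_eq_divide)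
    have "(INF n. ?f n s) \<le> ?f n s" by (rule INF_lower) simp
    also have "?f n s = 0" using \<open>r + 1 / Suc n < s\<close> by (simp add: indicator_def)
    finally show ?thesis using True by simp
  next
    case False
    then have "?f n s = ennreal (g s) * indicator {0..r} s" for n
      by (auto simp: indicator_def intro: order_trans[of s r])
    then show ?thesis by simp
  qed
  then have "(\<integral>\<^sup>+ s\<in>{0..r}. ennreal (g s) \<partial>lborel) = (\<integral>\<^sup>+ s. (INF n. ?f n s) \<partial>lborel)"
    by simp
  also have "\<dots> = (INF n. integral\<^sup>N lborel (?f n))"
    using fin by (intro nn_integral_monotone_convergence_INF_decseq[OF dec, where i=0]) simp_all
  finally show ?thesis .
qed

lemma nn_integral_Icc_left_continuous:
  fixes g :: "real \<Rightarrow> real"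
  assumes g[measurable]: "g \<in> borel_measurable borel" and r: "0 < r"
  shows "(\<integral>\<^sup>+ s\<in>{0..r}. ennreal (g s) \<partial>lborel)
    = (SUP n. \<integral>\<^sup>+ s\<in>{0..r - r / Suc (Suc n)}. ennreal (g s) \<partial>lborel)"
proof -
  let ?f = "\<lambda>n s. ennreal (g s) * indicator {0..r - r / Suc (Suc n)} s"
  have inc: "incseq ?f"
  proof (rule incseq_SucI, rule le_funI)
    fix n s
    have "r / Suc (Suc (Suc n)) \<le> r / Suc (Suc n)" using r by (intro divide_left_mono) auto
    then show "?f n s \<le> ?f (Suc n) s" by (auto simp: indicator_def)
  qed
  have "(SUP n. ?f n s) = ennreal (g s) * indicator {0..<r} s" for s
  proof (cases "s \<in> {0..<r}")
    case True
    then have "0 < (r - s) / r" using r by simp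
    then obtain n where n: "inverse (real (Suc n)) < (r - s) / r" using reals_Archimedean by blast
    have "r / Suc (Suc n) \<le> r / Suc n" using r by (intro divide_left_mono) auto
    also have "r / Suc n < r - s" using n r by (simp add: field_simps)
    finally have "?f n s = ennreal (g s)" using True by (auto simp: indicator_def)
    moreover have "?f m s \<le> ennreal (g s)" for m by (auto simp: indicator_def)
    ultimately have "(SUP n. ?f n s) = ennreal (g s)"
      by (intro antisym SUP_least) (auto intro: SUP_upper2[of n])
    then show ?thesis using True by simp
  next
    case False
    have vanish: "?f n s = 0" for n
    proof -
      have "r - r / Suc (Suc n) < r" using r by simp
      then show ?thesis using False by (auto simp: indicator_def)
    qed
    show ?thesis unfolding vanish using False by simp
  qed
  moreover have "(\<integral>\<^sup>+ s\<in>{0..r}. ennreal (g s) \<partial>lborel) = (\<integral>\<^sup>+ s\<in>{0..<r}. ennreal (g s) \<partial>lborel)"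
    by (rule nn_integral_cong_AE)
       (use AE_lborel_singleton[of r] in \<open>auto elim!: eventually_mono simp: indicator_def\<close>)
  ultimately have "(\<integral>\<^sup>+ s\<in>{0..r}. ennreal (g s) \<partial>lborel) = (\<integral>\<^sup>+ s. (SUP n. ?f n s) \<partial>lborel)"
    by simp
  also have "\<dots> = (SUP n. integral\<^sup>N lborel (?f n))"
    by (rule nn_integral_monotone_convergence_SUP[OF inc]) simp
  finally show ?thesis .
qed

lemma nn_integral_Icc_unbounded:
  fixes g :: "real \<Rightarrow> real"
  assumes g[measurable]: "g \<in> borel_measurable borel"
    and inf: "(\<integral>\<^sup>+ s\<in>{0..}. ennreal (g s) \<partial>lborel) = \<infinity>"
  shows "\<exists>r. ennreal c < (\<integral>\<^sup>+ s\<in>{0..r}. ennreal (g s) \<partial>lborel)"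
proof -
  let ?f = "\<lambda>n::nat. \<lambda>s. ennreal (g s) * indicator {0..real n} s"
  have inc: "incseq ?f"
    by (rule incseq_SucI, rule le_funI) (auto simp: indicator_def)
  have "(SUP n. ?f n s) = ennreal (g s) * indicator {0..} s" for s
  proof (cases "0 \<le> s")
    case True
    obtain n where "s \<le> real n" using real_arch_simple by blast
    then have "?f n s = ennreal (g s)" using True by (auto simp: indicator_def)
    moreover have "?f m s \<le> ennreal (g s)" for m by (auto simp: indicator_def)
    ultimately have "(SUP n. ?f n s) = ennreal (g s)"
      by (intro antisym SUP_least) (auto intro: SUP_upper2[of n])
    then show ?thesis using True by simp
  qed (simp add: indicator_def)
  then have "\<infinity> = (\<integral>\<^sup>+ s. (SUP n. ?f n s) \<partial>lborel)" using inf by simp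
  also have "\<dots> = (SUP n. integral\<^sup>N lborel (?f n))"
    by (rule nn_integral_monotone_convergence_SUP[OF inc]) simp
  finally have "ennreal c < (SUP n. integral\<^sup>N lborel (?f n))" by simp
  then show ?thesis by (auto simp: less_SUP_iff)
qed

lemma level_crossing_nn_integral_Icc:
  fixes g :: "real \<Rightarrow> real"
  assumes g: "g \<in> borel_measurable borel"
    and fin: "\<forall>r\<ge>0. (\<integral>\<^sup>+ s\<in>{0..r}. ennreal (g s) \<partial>lborel) < \<infinity>"
    and inf: "(\<integral>\<^sup>+ s\<in>{0..}. ennreal (g s) \<partial>lborel) = \<infinity>"
    and "0 < e"
  shows "level_crossing (\<lambda>r. \<integral>\<^sup>+ s\<in>{0..r}. ennreal (g s) \<partial>lborel) e"
proof
  show "(\<integral>\<^sup>+ s\<in>{0..a}. ennreal (g s) \<partial>lborel) \<le> (\<integral>\<^sup>+ s\<in>{0..b}. ennreal (g s) \<partial>lborel)"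
    if "a \<le> b" for a b
    using that by (intro nn_integral_mono) (auto simp: indicator_def)
  show "(\<integral>\<^sup>+ s\<in>{0..0}. ennreal (g s) \<partial>lborel) = 0"
  proof -
    have "(\<integral>\<^sup>+ s\<in>{0..0}. ennreal (g s) \<partial>lborel) = (\<integral>\<^sup>+ (s::real). 0 \<partial>lborel)"
      by (rule nn_integral_cong_AE)
         (use AE_lborel_singleton[of 0] in \<open>auto elim!: eventually_mono simp: indicator_def\<close>)
    then show ?thesis by simp
  qed
  show "(\<integral>\<^sup>+ s\<in>{0..r}. ennreal (g s) \<partial>lborel)
    = (INF n. \<integral>\<^sup>+ s\<in>{0..r + 1 / Suc n}. ennreal (g s) \<partial>lborel)" if "0 \<le> r" for r
    using g that fin by (intro nn_integral_Icc_right_continuous) auto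
  show "(\<integral>\<^sup>+ s\<in>{0..r}. ennreal (g s) \<partial>lborel)
    = (SUP n. \<integral>\<^sup>+ s\<in>{0..r - r / Suc (Suc n)}. ennreal (g s) \<partial>lborel)" if "0 < r" for r
    using g that by (rule nn_integral_Icc_left_continuous)
  show "\<exists>r. ennreal e < (\<integral>\<^sup>+ s\<in>{0..r}. ennreal (g s) \<partial>lborel)"
    using g inf by (rule nn_integral_Icc_unbounded)
qed (fact \<open>0 < e\<close>)

lemma (in pair_sigma_finite) nn_integral_mult_Fubini:
  assumes [measurable]: "(\<lambda>(x, y). g y x) \<in> borel_measurable (M1 \<Otimes>\<^sub>M M2)" "h \<in> borel_measurable M1"
  shows "(\<integral>\<^sup>+ x. (\<integral>\<^sup>+ y. g y x \<partial>M2) * h x \<partial>M1) = (\<integral>\<^sup>+ y. \<integral>\<^sup>+ x. g y x * h x \<partial>M1 \<partial>M2)"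
proof -
  have "(\<integral>\<^sup>+ x. (\<integral>\<^sup>+ y. g y x \<partial>M2) * h x \<partial>M1) = (\<integral>\<^sup>+ x. \<integral>\<^sup>+ y. g y x * h x \<partial>M2 \<partial>M1)"
    by (rule nn_integral_cong, rule nn_integral_multc[symmetric]) measurable
  also have "\<dots> = (\<integral>\<^sup>+ y. \<integral>\<^sup>+ x. g y x * h x \<partial>M1 \<partial>M2)"
    by (rule Fubini'[symmetric]) measurable
  finally show ?thesis .
qed

lemma AE_nn_integral_adapted_eq_nn_cond_exp:
  fixes f :: "real \<Rightarrow> 'a \<Rightarrow> real"
  assumes P: "finite_measure P" and Ft: "subalgebra P Ft"
    and f[measurable]: "(\<lambda>(s, w). f s w) \<in> borel_measurable (lborel \<Otimes>\<^sub>M P)"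
    and adapted: "\<And>s. s \<in> {0..r} \<Longrightarrow> f s \<in> borel_measurable Ft"
  defines "X \<equiv> \<lambda>w. \<integral>\<^sup>+ s\<in>{0..r}. ennreal (f s w) \<partial>lborel"
  shows "AE w in P. X w = nn_cond_exp P Ft X w"
proof -
  interpret finite_measure P by fact
  interpret Ft: finite_measure_subalgebra P Ft by unfold_locales (rule Ft)
  define g where "g s w = ennreal (f s w) * indicator {0..r} s" for s w
  have g[measurable]: "(\<lambda>(w, s). g s w) \<in> borel_measurable (P \<Otimes>\<^sub>M lborel)"
    using measurable_pair_swap[of "\<lambda>(s, w). g s w"] unfolding g_def by measurable
  have X_def': "X w = (\<integral>\<^sup>+ s. g s w \<partial>lborel)" for w unfolding X_def g_def ..
  have [measurable]: "X \<in> borel_measurable P"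
    unfolding X_def' by (rule lborel.borel_measurable_nn_integral) (use g in simp)
  define Z where "Z = nn_cond_exp P Ft X"
  have [measurable]: "Z \<in> borel_measurable P" "Z \<in> borel_measurable Ft" unfolding Z_def by auto
  have Fubini: "(\<integral>\<^sup>+ w. X w * h w \<partial>P) = (\<integral>\<^sup>+ s. \<integral>\<^sup>+ w. g s w * h w \<partial>P \<partial>lborel)"
    if "h \<in> borel_measurable P" for h
    unfolding X_def' using g that by (intro pair_sigma_finite.nn_integral_mult_Fubini) unfold_locales
  have "AE w in P. X w = Z w"
  proof (rule density_unique2)
    fix A assume A[measurable]: "A \<in> sets P"
    define \<beta> where "\<beta> = nn_cond_exp P Ft (indicator A)"
    have [measurable]: "\<beta> \<in> borel_measurable P" "\<beta> \<in> borel_measurable Ft" unfolding \<beta>_def by auto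
    have slice: "(\<integral>\<^sup>+ w. g s w * indicator A w \<partial>P) = (\<integral>\<^sup>+ w. g s w * \<beta> w \<partial>P)" for s
    proof (cases "s \<in> {0..r}")
      case True
      have [measurable]: "(\<lambda>w. ennreal (f s w)) \<in> borel_measurable Ft"
        using adapted[OF True] by measurable
      have "(\<integral>\<^sup>+ w. ennreal (f s w) * \<beta> w \<partial>P) = (\<integral>\<^sup>+ w. ennreal (f s w) * indicator A w \<partial>P)"
        unfolding \<beta>_def by (rule Ft.nn_cond_exp_intg) auto
      then show ?thesis using True by (simp add: g_def)
    qed (simp add: g_def)
    have "(\<integral>\<^sup>+ w. X w * indicator A w \<partial>P) = (\<integral>\<^sup>+ w. X w * \<beta> w \<partial>P)"
      by (simp add: Fubini slice)
    also have "\<dots> = (\<integral>\<^sup>+ w. \<beta> w * Z w \<partial>P)"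
      unfolding Z_def by (subst mult.commute, rule Ft.nn_cond_exp_intg[symmetric]) auto
    also have "\<dots> = (\<integral>\<^sup>+ w. Z w * indicator A w \<partial>P)"
      unfolding \<beta>_def by (subst mult.commute, rule Ft.nn_cond_exp_intg) auto
    finally show "(\<integral>\<^sup>+ w\<in>A. X w \<partial>P) = (\<integral>\<^sup>+ w\<in>A. Z w \<partial>P)" .
  qed auto
  then show ?thesis unfolding Z_def .
qed

lemma sum_le_iff_sum_min:
  fixes a :: "'i \<Rightarrow> real"
  assumes "finite I" and "\<And>j. j \<in> I \<Longrightarrow> 0 \<le> a j"
  shows "sum a I \<le> t \<longleftrightarrow> (\<forall>j\<in>I. a j \<le> t) \<and> (\<Sum>j\<in>I. min (a j) t) \<le> t"
proof
  assume le: "sum a I \<le> t"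
  moreover have "\<forall>j\<in>I. a j \<le> t"
  proof
    fix j assume "j \<in> I"
    then have "a j \<le> sum a I" by (rule member_le_sum) (use assms in auto)
    then show "a j \<le> t" using le by simp
  qed
  moreover from this have "(\<Sum>j\<in>I. min (a j) t) = sum a I" by (intro sum.cong) auto
  ultimately show "(\<forall>j\<in>I. a j \<le> t) \<and> (\<Sum>j\<in>I. min (a j) t) \<le> t" by simp
next
  assume "(\<forall>j\<in>I. a j \<le> t) \<and> (\<Sum>j\<in>I. min (a j) t) \<le> t"
  moreover from this have "(\<Sum>j\<in>I. min (a j) t) = sum a I" by (intro sum.cong) auto
  ultimately show "sum a I \<le> t" by simp
qed

locale intensity_time_change =
  fixes P :: "'a::polish_space measure" and Q :: "'b::polish_space measure"
    and F :: "real \<Rightarrow> 'a measure"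
    and N :: nat
    and E :: "nat \<Rightarrow> 'b \<Rightarrow> real"
    and lam :: "nat \<Rightarrow> real \<Rightarrow> 'a \<Rightarrow> real"
    and k :: nat and t :: real
  assumes P: "prob_space P" and P_borel: "sets P = sets borel"
    and Q: "prob_space Q" and Q_borel: "sets Q = sets borel"
    and F_sub: "\<And>s. 0 \<le> s \<Longrightarrow> subalgebra P (F s)"
    and F_mono: "\<And>s r. 0 \<le> s \<Longrightarrow> s \<le> r \<Longrightarrow> sets (F s) \<subseteq> sets (F r)"
    and E_exp: "\<And>n. n \<in> {1..N} \<Longrightarrow> distributed Q lborel (E n) (exponential_density 1)"
    and lam_meas: "\<And>n. n \<in> {1..N} \<Longrightarrow>
          (\<lambda>(s, w). lam n s w) \<in> borel_measurable (restrict_space borel {0..} \<Otimes>\<^sub>M P)"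
    and lam_adapted: "\<And>n s. n \<in> {1..N} \<Longrightarrow> 0 \<le> s \<Longrightarrow> lam n s \<in> borel_measurable (F s)"
    and lam_fin: "\<And>n. n \<in> {1..N} \<Longrightarrow>
          AE w in P. \<forall>r\<ge>0. (\<integral>\<^sup>+ s\<in>{0..r}. ennreal (lam n s w) \<partial>lborel) < \<infinity>"
    and lam_inf: "\<And>n. n \<in> {1..N} \<Longrightarrow>
          AE w in P. (\<integral>\<^sup>+ s\<in>{0..}. ennreal (lam n s w) \<partial>lborel) = \<infinity>"
    and k: "k \<in> {1..N}" and t: "0 \<le> t"
begin

sublocale P: prob_space P by (fact P)
sublocale Q: prob_space Q by (fact Q)
sublocale PQ: pair_prob_space P Q ..

abbreviation "M \<equiv> completion (P \<Otimes>\<^sub>M Q)"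
abbreviation "tau' \<equiv> tau_tilde lam E"

text \<open>\<open>lam\<close> is only measurable on \<open>[0, \<infinity>)\<close>; extending it by zero makes the cumulative
  intensity an integral over \<open>lborel\<close>.\<close>
definition "lam0 n s w = (if 0 \<le> s then lam n s w else 0)"
definition "Lambda n r w = (\<integral>\<^sup>+ s\<in>{0..r}. ennreal (lam0 n s w) \<partial>lborel)"

definition regular :: "'a \<times> 'b \<Rightarrow> bool" where
  "regular x \<longleftrightarrow> (\<forall>n\<in>{1..N}. (\<forall>r\<ge>0. Lambda n r (fst x) < \<infinity>) \<and>
     (\<integral>\<^sup>+ s\<in>{0..}. ennreal (lam0 n s (fst x)) \<partial>lborel) = \<infinity> \<and> 0 < E n (snd x))"

lemma space_P[simp]: "space P = UNIV" using sets_eq_imp_space_eq[OF P_borel] by simp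
lemma space_Q[simp]: "space Q = UNIV" using sets_eq_imp_space_eq[OF Q_borel] by simp
lemma space_PQ[simp]: "space (P \<Otimes>\<^sub>M Q) = UNIV" by (simp add: space_pair_measure)
lemma space_F[simp]: "0 \<le> s \<Longrightarrow> space (F s) = UNIV" using F_sub[of s] by (simp add: subalgebra_def)

lemma lam0_measurable[measurable]:
  assumes n: "n \<in> {1..N}"
  shows "(\<lambda>(w, s). lam0 n s w) \<in> borel_measurable (P \<Otimes>\<^sub>M lborel)"
proof -
  have [measurable]: "(\<lambda>(s, w). lam n s w) \<in> borel_measurable (restrict_space borel {0..} \<Otimes>\<^sub>M P)"
    by (rule lam_meas[OF n])
  have [measurable]: "(\<lambda>x::'a \<times> real. (max 0 (snd x), fst x))
      \<in> measurable (P \<Otimes>\<^sub>M lborel) (restrict_space borel {0..} \<Otimes>\<^sub>M P)"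
    by (intro measurable_Pair) (auto simp: measurable_restrict_space2_iff)
  have "(\<lambda>x. if 0 \<le> snd x then lam n (max 0 (snd x)) (fst x) else 0)
      \<in> borel_measurable (P \<Otimes>\<^sub>M lborel)"
    using measurable_compose[OF _ lam_meas[OF n], of "\<lambda>x. (max 0 (snd x), fst x)"] by measurable
  then show ?thesis by (rule measurable_cong[THEN iffD1, rotated]) (auto simp: lam0_def)
qed

lemma lam0_measurable'[measurable]:
  "n \<in> {1..N} \<Longrightarrow> (\<lambda>(s, w). lam0 n s w) \<in> borel_measurable (lborel \<Otimes>\<^sub>M P)"
  using measurable_pair_swap[OF lam0_measurable] by simp

lemma Lambda_measurable[measurable]: "n \<in> {1..N} \<Longrightarrow> Lambda n r \<in> borel_measurable P"
  unfolding Lambda_def by (rule lborel.borel_measurable_nn_integral) (simp add: split_beta')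

lemma E_measurable[measurable]: "n \<in> {1..N} \<Longrightarrow> E n \<in> borel_measurable Q"
  using distributed_measurable[OF E_exp] by (simp add: measurable_cong_sets[OF Q_borel refl])

lemma Lambda_eq: "(\<integral>\<^sup>+ s\<in>{0..r}. ennreal (lam n s w) \<partial>lborel) = Lambda n r w"
  unfolding Lambda_def by (rule nn_integral_cong) (auto simp: lam0_def indicator_def)

lemma tau'_eq_crossing_time:
  "tau' n x = crossing_time (\<lambda>r. Lambda n r (fst x)) (E n (snd x))"
  by (cases x) (simp add: tau_tilde_def crossing_time_def Lambda_eq)

lemma AE_M_fst:
  assumes "AE w in P. \<phi> w" shows "AE x in M. \<phi> (fst x)"
proof -
  obtain A where A: "{w \<in> space P. \<not> \<phi> w} \<subseteq> A" "A \<in> null_sets P"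
    using assms unfolding eventually_ae_filter by blast
  have "A \<times> space Q \<in> null_sets (P \<Otimes>\<^sub>M Q)"
    using A(2) by (intro Q.times_in_null_sets1) (use sets.top[of Q] in auto)
  then have "AE x in P \<Otimes>\<^sub>M Q. \<phi> (fst x)" using A(1) by (intro AE_I') (auto simp: space_pair_measure)
  then show ?thesis by (rule AE_completion)
qed

lemma AE_M_snd:
  assumes "AE w in Q. \<phi> w" shows "AE x in M. \<phi> (snd x)"
proof -
  obtain A where A: "{w \<in> space Q. \<not> \<phi> w} \<subseteq> A" "A \<in> null_sets Q"
    using assms unfolding eventually_ae_filter by blast
  have "space P \<times> A \<in> null_sets (P \<Otimes>\<^sub>M Q)"
    using A(2) by (intro Q.times_in_null_sets2) (use sets.top[of P] in auto)
  then have "AE x in P \<Otimes>\<^sub>M Q. \<phi> (snd x)" using A(1) by (intro AE_I') (auto simp: space_pair_measure)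
  then show ?thesis by (rule AE_completion)
qed

lemma AE_E_pos: "n \<in> {1..N} \<Longrightarrow> AE w in Q. 0 < E n w"
proof -
  assume n: "n \<in> {1..N}"
  have "\<P>(w in Q. E n w \<le> 0) = 1 - exp (- 0 * 1)"
    by (rule Q.exponential_distributedD_le[OF E_exp[OF n]]) auto
  moreover have "{w \<in> space Q. E n w \<le> 0} \<in> sets Q" using E_measurable[OF n] by measurable
  ultimately have "{w \<in> space Q. E n w \<le> 0} \<in> null_sets Q"
    by (simp add: null_sets_def Q.emeasure_eq_measure)
  from AE_not_in[OF this] show ?thesis by eventually_elim auto
qed

lemma AE_regular: "AE x in M. regular x"
  unfolding regular_def
proof (rule eventually_ball_finite[OF finite_atLeastAtMost], intro ballI)
  fix n assume n: "n \<in> {1..N}"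
  have "AE x in M. \<forall>r\<ge>0. Lambda n r (fst x) < \<infinity>"
    using AE_M_fst[OF lam_fin[OF n]] by (simp add: Lambda_eq)
  moreover have "AE x in M. (\<integral>\<^sup>+ s\<in>{0..}. ennreal (lam0 n s (fst x)) \<partial>lborel) = \<infinity>"
  proof -
    have "(\<integral>\<^sup>+ s\<in>{0..}. ennreal (lam n s w) \<partial>lborel) = (\<integral>\<^sup>+ s\<in>{0..}. ennreal (lam0 n s w) \<partial>lborel)"
      for w by (rule nn_integral_cong) (auto simp: lam0_def indicator_def)
    then show ?thesis using AE_M_fst[OF lam_inf[OF n]] by simp
  qed
  moreover have "AE x in M. 0 < E n (snd x)" by (rule AE_M_snd[OF AE_E_pos[OF n]])
  ultimately show "AE x in M. (\<forall>r\<ge>0. Lambda n r (fst x) < \<infinity>) \<and>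
      (\<integral>\<^sup>+ s\<in>{0..}. ennreal (lam0 n s (fst x)) \<partial>lborel) = \<infinity> \<and> 0 < E n (snd x)"
    by eventually_elim auto
qed

lemma level_crossing_Lambda:
  assumes "n \<in> {1..N}" and "regular x"
  shows "level_crossing (\<lambda>r. Lambda n r (fst x)) (E n (snd x))"
  unfolding Lambda_def using assms
  by (intro level_crossing_nn_integral_Icc) (auto simp: regular_def Lambda_def)

lemma tau'_pos: "n \<in> {1..N} \<Longrightarrow> regular x \<Longrightarrow> 0 < tau' n x"
  unfolding tau'_eq_crossing_time by (rule level_crossing.crossing_time_pos[OF level_crossing_Lambda])

lemma tau'_le_iff:
  "n \<in> {1..N} \<Longrightarrow> regular x \<Longrightarrow> 0 \<le> s \<Longrightarrow> tau' n x \<le> s \<longleftrightarrow> ennreal (E n (snd x)) \<le> Lambda n s (fst x)"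
  unfolding tau'_eq_crossing_time by (rule level_crossing.crossing_time_le_iff[OF level_crossing_Lambda])

lemma E_le_iff_rational:
  "n \<in> {1..N} \<Longrightarrow> regular x \<Longrightarrow>
    E n (snd x) \<le> c \<longleftrightarrow> (\<forall>q\<in>\<rat>. 0 \<le> q \<and> q < tau' n x \<longrightarrow> Lambda n q (fst x) \<le> ennreal c)"
  unfolding tau'_eq_crossing_time by (rule level_crossing.level_le_iff_rational[OF level_crossing_Lambda])

lemma tau_eq_sum: "tau lam E n x = (\<Sum>j\<in>{1..n}. tau' j x)"
  unfolding tau_def ..

lemma tau'_nonneg: "regular x \<Longrightarrow> j \<in> {1..k} \<Longrightarrow> 0 \<le> tau' j x"
  using tau'_pos[of j x] k by (auto simp: less_imp_le)

lemma tau'_measurable[measurable]: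
  assumes n: "n \<in> {1..N}" shows "tau' n \<in> borel_measurable M"
  unfolding borel_measurable_iff_le
proof
  fix s
  have [measurable]: "Lambda n s \<in> borel_measurable P" "E n \<in> borel_measurable Q"
    using n by measurable
  have "{x \<in> space (P \<Otimes>\<^sub>M Q). ennreal (E n (snd x)) \<le> Lambda n s (fst x)} \<in> sets (P \<Otimes>\<^sub>M Q)"
    by measurable
  then have A: "{x. ennreal (E n (snd x)) \<le> Lambda n s (fst x)} \<in> sets M" by simp
  show "{x \<in> space M. tau' n x \<le> s} \<in> sets M"
  proof (cases "0 \<le> s")
    case True
    have "AE x in M. x \<in> {x. ennreal (E n (snd x)) \<le> Lambda n s (fst x)} \<longleftrightarrow>
        x \<in> {x \<in> space M. tau' n x \<le> s}"
      using AE_regular by eventually_elim (simp add: tau'_le_iff[OF n _ True])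
    then show ?thesis by (rule completion.in_sets_AE[OF _ A]) simp
  next
    case False
    have "AE x in M. x \<in> {} \<longleftrightarrow> x \<in> {x \<in> space M. tau' n x \<le> s}"
      using AE_regular by eventually_elim (use tau'_pos[OF n] False in fastforce)
    then show ?thesis by (rule completion.in_sets_AE) simp_all
  qed
qed

lemma tau_measurable[measurable]: "n \<le> N \<Longrightarrow> tau lam E n \<in> borel_measurable M"
  unfolding tau_def[abs_def] by (intro borel_measurable_sum tau'_measurable) auto

abbreviation "G_t \<equiv> G_sigma P Q F lam E k t"
abbreviation "FE_t \<equiv> FE_sigma P Q F E k t"
abbreviation "tau_k_le_t \<equiv> {x. tau lam E k x \<le> t}"

definition "F_rectangles = {A \<times> space Q | A. A \<in> sets (F t)}"
definition "tau_events = {{x \<in> space P \<times> space Q. tau lam E n x \<le> s} | n s. n \<in> {1..k} \<and> 0 \<le> s \<and> s \<le> t}"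
definition "E_events = {space P \<times> {w' \<in> space Q. E n w' \<in> B} | n B. n \<in> {1..k} \<and> B \<in> sets borel}"

lemma sets_G_t: "sets G_t = sigma_sets UNIV (F_rectangles \<union> tau_events)"
  and space_G_t[simp]: "space G_t = UNIV"
  unfolding G_sigma_def F_rectangles_def tau_events_def
  by (auto simp: sets_measure_of_conv space_measure_of_conv)

lemma sets_FE_t: "sets FE_t = sigma_sets UNIV (F_rectangles \<union> E_events)"
  and space_FE_t[simp]: "space FE_t = UNIV"
  unfolding FE_sigma_def F_rectangles_def E_events_def
  by (auto simp: sets_measure_of_conv space_measure_of_conv)

lemma F_rectangles_sets_M: "F_rectangles \<subseteq> sets M"
proof
  fix X assume "X \<in> F_rectangles"
  then obtain A where "X = A \<times> UNIV" "A \<in> sets P"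
    using F_sub[OF t] unfolding F_rectangles_def subalgebra_def by auto
  moreover have "A \<times> space Q \<in> sets (P \<Otimes>\<^sub>M Q)" if "A \<in> sets P" for A
    using that by (intro pair_measureI) (use sets.top[of Q] in auto)
  ultimately show "X \<in> sets M" by simp
qed

lemma subalgebra_G_t: "subalgebra M G_t"
proof -
  have "tau_events \<subseteq> sets M"
  proof
    fix X assume "X \<in> tau_events"
    then obtain n s where "X = {x. tau lam E n x \<le> s}" "n \<le> N"
      unfolding tau_events_def using k by auto
    moreover from this(2) have [measurable]: "tau lam E n \<in> borel_measurable M"
      by (rule tau_measurable)
    moreover have "{x \<in> space M. tau lam E n x \<le> s} \<in> sets M" by measurable
    ultimately show "X \<in> sets M" by simp
  qed
  then show ?thesis
    using sets.sigma_sets_subset[of "F_rectangles \<union> tau_events" M] F_rectangles_sets_M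
    unfolding subalgebra_def sets_G_t by simp
qed

lemma subalgebra_FE_t: "subalgebra M FE_t"
proof -
  have "E_events \<subseteq> sets M"
  proof
    fix X assume "X \<in> E_events"
    then obtain n B where "X = UNIV \<times> {w. E n w \<in> B}" "n \<in> {1..N}" "B \<in> sets borel"
      unfolding E_events_def using k by auto
    moreover from this(2,3) have "{w. E n w \<in> B} \<in> sets Q"
      using measurable_sets[OF E_measurable] by (simp add: vimage_def)
    ultimately show "X \<in> sets M"
      using sets.top[of P] by (auto intro!: pair_measureI)
  qed
  then show ?thesis
    using sets.sigma_sets_subset[of "F_rectangles \<union> E_events" M] F_rectangles_sets_M
    unfolding subalgebra_def sets_FE_t by simp
qed

lemma sigma_algebra_G_t: "sigma_algebra UNIV (sets G_t)"
  using sets.sigma_algebra_axioms[of G_t] by simp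

lemma sigma_algebra_FE_t: "sigma_algebra UNIV (sets FE_t)"
  using sets.sigma_algebra_axioms[of FE_t] by simp

lemma tau_k_le_t_in_G_t: "tau_k_le_t \<in> sets G_t"
proof -
  have "{x \<in> space P \<times> space Q. tau lam E k x \<le> t} \<in> tau_events"
    unfolding tau_events_def by (intro CollectI exI[of _ k] exI[of _ t]) (use k t in auto)
  then show ?thesis unfolding sets_G_t by auto
qed

lemma measurable_fst_sigma_F_rectangles:
  assumes "\<phi> \<in> borel_measurable (F t)" "F_rectangles \<subseteq> sets G"
    and "space G = UNIV"
  shows "(\<lambda>x. \<phi> (fst x)) \<in> borel_measurable G"
proof (rule measurableI)
  fix B :: "'c set" assume "B \<in> sets borel"
  then have "\<phi> -` B \<in> sets (F t)" using measurable_sets[OF assms(1)] t by (simp add: vimage_def)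
  then have "(\<phi> -` B) \<times> space Q \<in> F_rectangles" unfolding F_rectangles_def by blast
  moreover have "(\<lambda>x. \<phi> (fst x)) -` B \<inter> space G = (\<phi> -` B) \<times> space Q" using assms(3) by auto
  ultimately show "(\<lambda>x. \<phi> (fst x)) -` B \<inter> space G \<in> sets G" using assms(2) by auto
qed (use assms(3) in auto)

lemma F_rectangles_G_t: "F_rectangles \<subseteq> sets G_t"
  unfolding sets_G_t by auto

lemma F_rectangles_FE_t: "F_rectangles \<subseteq> sets FE_t"
  unfolding sets_FE_t by auto

lemma E_measurable_FE_t:
  assumes n: "n \<in> {1..k}" shows "(\<lambda>x. E n (snd x)) \<in> borel_measurable FE_t"
proof (rule measurableI)
  fix B :: "real set" assume "B \<in> sets borel"
  then have "space P \<times> {w' \<in> space Q. E n w' \<in> B} \<in> E_events"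
    unfolding E_events_def using n by blast
  moreover have "(\<lambda>x. E n (snd x)) -` B \<inter> space FE_t = space P \<times> {w' \<in> space Q. E n w' \<in> B}"
    by auto
  ultimately show "(\<lambda>x. E n (snd x)) -` B \<inter> space FE_t \<in> sets FE_t"
    unfolding sets_FE_t by auto
qed auto

text \<open>The integral of an adapted process need not be adapted without completion, so the
  cumulative intensity is replaced by an \<open>F t\<close>-measurable version.\<close>
definition "Lambda_t n r = nn_cond_exp P (F t) (Lambda n r)"

lemma Lambda_t_measurable[measurable]: "Lambda_t n r \<in> borel_measurable (F t)"
  unfolding Lambda_t_def by simp

lemma AE_Lambda_eq_Lambda_t:
  assumes n: "n \<in> {1..N}" and r: "0 \<le> r" "r \<le> t"
  shows "AE x in M. Lambda n r (fst x) = Lambda_t n r (fst x)"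
proof -
  have "lam0 n s \<in> borel_measurable (F t)" if s: "s \<in> {0..r}" for s
  proof -
    have "subalgebra (F t) (F s)"
      unfolding subalgebra_def using F_mono[of s t] s r by auto
    from measurable_from_subalg[OF this lam_adapted[OF n]] s
    show ?thesis by (simp add: lam0_def[abs_def])
  qed
  from AE_nn_integral_adapted_eq_nn_cond_exp[OF P.finite_measure_axioms F_sub[OF t]
      lam0_measurable'[OF n] this]
  have "AE w in P. Lambda n r w = Lambda_t n r w"
    unfolding Lambda_t_def Lambda_def[abs_def] by simp
  then show ?thesis by (rule AE_M_fst)
qed

abbreviation "FE_completed \<equiv> sigma UNIV (ae_trace_closure M UNIV (sets FE_t))"

lemma sets_FE_completed: "sets FE_completed = ae_trace_closure M UNIV (sets FE_t)"
  using sets_sigma_ae_trace_closure[of M "sets FE_t" UNIV] sigma_algebra_FE_t by simp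

lemma tau'_le_in_FE_completed:
  assumes n: "n \<in> {1..k}" and "s \<le> t"
  shows "{x. tau' n x \<le> s} \<in> ae_trace_closure M UNIV (sets FE_t)"
proof (cases "0 \<le> s")
  case True
  have n': "n \<in> {1..N}" using n k by auto
  have [measurable]: "(\<lambda>x. E n (snd x)) \<in> borel_measurable FE_t"
    "(\<lambda>x. Lambda_t n s (fst x)) \<in> borel_measurable FE_t"
    using E_measurable_FE_t[OF n]
      measurable_fst_sigma_F_rectangles[OF Lambda_t_measurable F_rectangles_FE_t] by auto
  have "{x \<in> space FE_t. ennreal (E n (snd x)) \<le> Lambda_t n s (fst x)} \<in> sets FE_t"
    by measurable
  moreover have "AE x in M. x \<in> UNIV \<longrightarrow> (x \<in> {x. tau' n x \<le> s} \<longleftrightarrow>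
      x \<in> {x \<in> space FE_t. ennreal (E n (snd x)) \<le> Lambda_t n s (fst x)})"
    using AE_regular AE_Lambda_eq_Lambda_t[OF n' True \<open>s \<le> t\<close>]
    by eventually_elim (simp add: tau'_le_iff[OF n' _ True])
  ultimately show ?thesis by (intro ae_trace_closureI) auto
next
  case False
  have "AE x in M. x \<in> UNIV \<longrightarrow> (x \<in> {x. tau' n x \<le> s} \<longleftrightarrow> x \<in> {})"
    using AE_regular by eventually_elim (use tau'_pos[of n] n k False in fastforce)
  then show ?thesis by (intro ae_trace_closureI[of _ _ "{}"]) auto
qed

lemma min_tau'_measurable_FE_completed:
  assumes n: "n \<in> {1..k}" shows "(\<lambda>x. min (tau' n x) t) \<in> borel_measurable FE_completed"
  unfolding borel_measurable_iff_le
proof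
  fix a
  show "{x \<in> space FE_completed. min (tau' n x) t \<le> a} \<in> sets FE_completed"
  proof (cases "t \<le> a")
    case True
    then have "{x \<in> space FE_completed. min (tau' n x) t \<le> a} = space FE_completed" by auto
    then show ?thesis using sets.top[of FE_completed] by simp
  next
    case False
    then have "{x \<in> space FE_completed. min (tau' n x) t \<le> a} = {x. tau' n x \<le> a}"
      by (auto simp: space_measure_of_conv)
    then show ?thesis using tau'_le_in_FE_completed[OF n] False by (simp add: sets_FE_completed)
  qed
qed

lemma sum_min_tau'_measurable_FE_completed:
  "m \<le> k \<Longrightarrow> (\<lambda>x. \<Sum>j\<in>{1..m}. min (tau' j x) t) \<in> borel_measurable FE_completed"
  by (intro borel_measurable_sum min_tau'_measurable_FE_completed) auto

lemma tau_le_iff_sum_min: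
  assumes "regular x" "m \<le> k" "x \<in> tau_k_le_t"
  shows "tau lam E m x \<le> s \<longleftrightarrow> (\<Sum>j\<in>{1..m}. min (tau' j x) t) \<le> s"
proof -
  have "\<forall>j\<in>{1..k}. tau' j x \<le> t"
    using assms(3) sum_le_iff_sum_min[of "{1..k}" "\<lambda>j. tau' j x" t] tau'_nonneg[OF assms(1)]
    by (simp add: tau_eq_sum)
  then show ?thesis using assms(2) by (simp add: tau_eq_sum)
qed

text \<open>Only the truncations \<open>min (tau' j) t\<close> are \<open>FE_t\<close>-measurable modulo null sets, so
  \<open>{\<tau>\<^sub>k \<le> t}\<close> is rewritten in terms of them.\<close>
lemma tau_k_le_t_AE_FE_t: "\<exists>A\<in>sets FE_t. AE x in M. x \<in> tau_k_le_t \<longleftrightarrow> x \<in> A"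
proof -
  define A where "A = (\<Inter>j\<in>{1..k}. {x. tau' j x \<le> t}) \<inter> {x. (\<Sum>j\<in>{1..k}. min (tau' j x) t) \<le> t}"
  have "(\<Inter>j\<in>{1..k}. {x. tau' j x \<le> t}) \<in> sets FE_completed"
    using k tau'_le_in_FE_completed
    by (intro sets.finite_INT) (auto simp: sets_FE_completed)
  moreover have "{x \<in> space FE_completed. (\<Sum>j\<in>{1..k}. min (tau' j x) t) \<le> t} \<in> sets FE_completed"
    using sum_min_tau'_measurable_FE_completed[of k] by measurable
  ultimately have "A \<in> sets FE_completed"
    unfolding A_def by (intro sets.Int) (auto simp: space_measure_of_conv)
  then have "A \<in> ae_trace_closure M UNIV (sets FE_t)" by (simp only: sets_FE_completed)
  then obtain A' where A': "A' \<in> sets FE_t" "AE x in M. x \<in> A \<longleftrightarrow> x \<in> A'"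
    unfolding ae_trace_closure_def by auto
  have "AE x in M. x \<in> tau_k_le_t \<longleftrightarrow> x \<in> A"
    using AE_regular
  proof eventually_elim
    case (elim x)
    then show ?case
      using sum_le_iff_sum_min[of "{1..k}" "\<lambda>j. tau' j x" t] tau'_nonneg[OF elim]
      by (simp add: A_def tau_eq_sum)
  qed
  with A' show ?thesis by (auto elim!: AE_mp intro!: bexI[of _ A'])
qed

lemma G_t_subset_trace_FE_t: "sets G_t \<subseteq> ae_trace_closure M tau_k_le_t (sets FE_t)"
proof -
  have "F_rectangles \<subseteq> ae_trace_closure M tau_k_le_t (sets FE_t)"
    using F_rectangles_FE_t subset_ae_trace_closure[of "sets FE_t" M tau_k_le_t] by auto
  moreover have "tau_events \<subseteq> ae_trace_closure M tau_k_le_t (sets FE_t)"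
  proof
    fix X assume "X \<in> tau_events"
    then obtain n s where X: "X = {x. tau lam E n x \<le> s}" "n \<in> {1..k}"
      unfolding tau_events_def by auto
    have [measurable]: "(\<lambda>x. \<Sum>j\<in>{1..n}. min (tau' j x) t) \<in> borel_measurable FE_completed"
      using X(2) by (intro sum_min_tau'_measurable_FE_completed) auto
    have "{x \<in> space FE_completed. (\<Sum>j\<in>{1..n}. min (tau' j x) t) \<le> s} \<in> sets FE_completed"
      by measurable
    then have "{x. (\<Sum>j\<in>{1..n}. min (tau' j x) t) \<le> s} \<in> ae_trace_closure M tau_k_le_t (sets FE_t)"
      using ae_trace_closure_antimono[of tau_k_le_t UNIV M "sets FE_t"]
      by (auto simp: sets_FE_completed space_measure_of_conv)
    moreover have "AE x in M. x \<in> tau_k_le_t \<longrightarrow>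
        (x \<in> X \<longleftrightarrow> x \<in> {x. (\<Sum>j\<in>{1..n}. min (tau' j x) t) \<le> s})"
      using AE_regular by eventually_elim (use tau_le_iff_sum_min X in auto)
    ultimately show "X \<in> ae_trace_closure M tau_k_le_t (sets FE_t)"
      by (rule ae_trace_closure_AE_cong) simp
  qed
  ultimately have "F_rectangles \<union> tau_events \<subseteq> ae_trace_closure M tau_k_le_t (sets FE_t)" by simp
  from sigma_sets_subset_ae_trace_closure[OF _ this] sigma_algebra_FE_t
  show ?thesis unfolding sets_G_t by simp
qed

abbreviation "G_traced \<equiv> sigma UNIV (ae_trace_closure M tau_k_le_t (sets G_t))"

lemma sets_G_traced: "sets G_traced = ae_trace_closure M tau_k_le_t (sets G_t)"
  using sets_sigma_ae_trace_closure[of M "sets G_t" tau_k_le_t] sigma_algebra_G_t by simp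

lemma G_t_subset_G_traced: "sets G_t \<subseteq> sets G_traced"
  unfolding sets_G_traced by (rule subset_ae_trace_closure) auto

lemma tau_le_in_G_traced:
  assumes n: "n \<in> {1..k}" shows "{x. tau lam E n x \<le> a} \<in> sets G_traced"
proof -
  consider "a < 0" | "0 \<le> a" "a \<le> t" | "t < a" by linarith
  then show ?thesis
  proof cases
    case 1
    have ae: "AE x in M. x \<in> tau_k_le_t \<longrightarrow> (x \<in> {x. tau lam E n x \<le> a} \<longleftrightarrow> x \<in> {})"
      using AE_regular
    proof eventually_elim
      case (elim x)
      have "0 < tau lam E n x"
        unfolding tau_eq_sum using n k tau'_pos[OF _ elim] by (intro sum_pos) auto
      then show ?case using 1 by simp
    qed
    have "{} \<in> ae_trace_closure M tau_k_le_t (sets G_t)"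
      using G_t_subset_G_traced unfolding sets_G_traced by auto
    from ae_trace_closure_AE_cong[OF this ae] show ?thesis unfolding sets_G_traced by simp
  next
    case 2
    then have "{x \<in> space P \<times> space Q. tau lam E n x \<le> a} \<in> tau_events"
      unfolding tau_events_def using n by (intro CollectI exI[of _ n] exI[of _ a]) auto
    then show ?thesis using G_t_subset_G_traced unfolding sets_G_t by auto
  next
    case 3
    have ae: "AE x in M. x \<in> tau_k_le_t \<longrightarrow> (x \<in> {x. tau lam E n x \<le> a} \<longleftrightarrow> x \<in> UNIV)"
      using AE_regular
    proof eventually_elim
      case (elim x)
      have "tau lam E n x \<le> tau lam E k x"
        unfolding tau_eq_sum using n tau'_nonneg[OF elim] by (intro sum_mono2) auto
      then show ?case using 3 by simp
    qed
    have "UNIV \<in> ae_trace_closure M tau_k_le_t (sets G_t)"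
      using G_t_subset_G_traced sets.top[of G_t] unfolding sets_G_traced by auto
    from ae_trace_closure_AE_cong[OF this ae] show ?thesis unfolding sets_G_traced by simp
  qed
qed

lemma tau_measurable_G_traced:
  assumes "n \<le> k" shows "tau lam E n \<in> borel_measurable G_traced"
proof (cases "n = 0")
  case False
  then show ?thesis
    using tau_le_in_G_traced[of n] assms by (auto simp: borel_measurable_iff_le space_measure_of_conv)
qed (simp add: tau_def[abs_def])

lemma tau'_measurable_G_traced:
  assumes n: "n \<in> {1..k}" shows "tau' n \<in> borel_measurable G_traced"
proof -
  obtain m where m: "n = Suc m" using n by (cases n) auto
  have [measurable]: "tau lam E n \<in> borel_measurable G_traced" "tau lam E m \<in> borel_measurable G_traced"
    using tau_measurable_G_traced n m by auto
  have "tau' n = (\<lambda>x. tau lam E n x - tau lam E m x)"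
    unfolding tau_eq_sum m by (simp add: sum.cl_ivl_Suc fun_eq_iff)
  then show ?thesis by simp
qed

lemma AE_Lambda_eq_Lambda_t_rational:
  assumes n: "n \<in> {1..N}"
  shows "AE x in M. \<forall>r::rat. 0 \<le> real_of_rat r \<and> real_of_rat r \<le> t \<longrightarrow>
    Lambda n (real_of_rat r) (fst x) = Lambda_t n (real_of_rat r) (fst x)"
proof (rule AE_all_countable[THEN iffD2], rule allI)
  fix r :: rat
  show "AE x in M. 0 \<le> real_of_rat r \<and> real_of_rat r \<le> t \<longrightarrow>
    Lambda n (real_of_rat r) (fst x) = Lambda_t n (real_of_rat r) (fst x)"
    using AE_Lambda_eq_Lambda_t[OF n, of "real_of_rat r"]
    by (cases "0 \<le> real_of_rat r \<and> real_of_rat r \<le> t") auto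
qed

lemma tau'_le_t: "regular x \<Longrightarrow> n \<in> {1..k} \<Longrightarrow> x \<in> tau_k_le_t \<Longrightarrow> tau' n x \<le> t"
  using member_le_sum[of n "{1..k}" "\<lambda>j. tau' j x"] tau'_nonneg by (simp add: tau_eq_sum)

lemma E_le_iff_rational_Lambda_t:
  assumes n: "n \<in> {1..N}" and "regular x" and "tau' n x \<le> t"
    and Lambda_t: "\<forall>r::rat. 0 \<le> real_of_rat r \<and> real_of_rat r \<le> t \<longrightarrow>
      Lambda n (real_of_rat r) (fst x) = Lambda_t n (real_of_rat r) (fst x)"
  shows "E n (snd x) \<le> c \<longleftrightarrow> (\<forall>r::rat. 0 \<le> real_of_rat r \<and> real_of_rat r < tau' n x \<longrightarrow>
    Lambda_t n (real_of_rat r) (fst x) \<le> ennreal c)"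
proof -
  have "E n (snd x) \<le> c \<longleftrightarrow> (\<forall>q\<in>\<rat>. 0 \<le> q \<and> q < tau' n x \<longrightarrow> Lambda n q (fst x) \<le> ennreal c)"
    by (rule E_le_iff_rational[OF n \<open>regular x\<close>])
  also have "\<dots> \<longleftrightarrow> (\<forall>r::rat. 0 \<le> real_of_rat r \<and> real_of_rat r < tau' n x \<longrightarrow>
      Lambda n (real_of_rat r) (fst x) \<le> ennreal c)"
    by (auto simp: Rats_def)
  also have "\<dots> \<longleftrightarrow> (\<forall>r::rat. 0 \<le> real_of_rat r \<and> real_of_rat r < tau' n x \<longrightarrow>
      Lambda_t n (real_of_rat r) (fst x) \<le> ennreal c)"
    using Lambda_t \<open>tau' n x \<le> t\<close> by (auto intro!: all_cong1 imp_cong[OF refl])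
  finally show ?thesis .
qed

lemma E_measurable_G_traced:
  assumes n: "n \<in> {1..k}" shows "(\<lambda>x. E n (snd x)) \<in> borel_measurable G_traced"
  unfolding borel_measurable_iff_le
proof
  fix c
  have n': "n \<in> {1..N}" using n k by auto
  have [measurable]: "tau' n \<in> borel_measurable G_traced" by (rule tau'_measurable_G_traced[OF n])
  have [measurable]: "(\<lambda>x. Lambda_t n q (fst x)) \<in> borel_measurable G_traced" for q
    using measurable_fst_sigma_F_rectangles[OF Lambda_t_measurable] F_rectangles_G_t G_t_subset_G_traced
    by (simp add: space_measure_of_conv)
  define C where "C = {x \<in> space G_traced. \<forall>r::rat. 0 \<le> real_of_rat r \<and> real_of_rat r < tau' n x \<longrightarrow>
    Lambda_t n (real_of_rat r) (fst x) \<le> ennreal c}"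
  have C: "C \<in> sets G_traced" unfolding C_def by measurable
  have "AE x in M. x \<in> tau_k_le_t \<longrightarrow> (x \<in> {x. E n (snd x) \<le> c} \<longleftrightarrow> x \<in> C)"
    using AE_regular AE_Lambda_eq_Lambda_t_rational[OF n']
    by eventually_elim
       (auto simp: C_def space_measure_of_conv E_le_iff_rational_Lambda_t[OF n' _ tau'_le_t[OF _ n]])
  then have "{x. E n (snd x) \<le> c} \<in> sets G_traced"
    using C ae_trace_closure_AE_cong[of C] unfolding sets_G_traced by simp
  then show "{x \<in> space G_traced. E n (snd x) \<le> c} \<in> sets G_traced"
    by (simp add: space_measure_of_conv)
qed

lemma FE_t_subset_trace_G_t: "sets FE_t \<subseteq> ae_trace_closure M tau_k_le_t (sets G_t)"
proof -
  have "F_rectangles \<subseteq> ae_trace_closure M tau_k_le_t (sets G_t)"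
    using F_rectangles_G_t subset_ae_trace_closure[of "sets G_t" M tau_k_le_t] by auto
  moreover have "E_events \<subseteq> ae_trace_closure M tau_k_le_t (sets G_t)"
  proof
    fix X assume "X \<in> E_events"
    then obtain n B where X: "X = space P \<times> {w' \<in> space Q. E n w' \<in> B}" "n \<in> {1..k}" "B \<in> sets borel"
      unfolding E_events_def by auto
    have "(\<lambda>x. E n (snd x)) -` B \<inter> space G_traced \<in> sets G_traced"
      by (rule measurable_sets[OF E_measurable_G_traced[OF X(2)] X(3)])
    moreover have "(\<lambda>x. E n (snd x)) -` B \<inter> space G_traced = X"
      using X(1) by (auto simp: space_measure_of_conv)
    ultimately show "X \<in> ae_trace_closure M tau_k_le_t (sets G_t)" by (simp add: sets_G_traced)
  qed
  ultimately have "F_rectangles \<union> E_events \<subseteq> ae_trace_closure M tau_k_le_t (sets G_t)" by simp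
  from sigma_sets_subset_ae_trace_closure[OF _ this] sigma_algebra_G_t
  show ?thesis unfolding sets_FE_t by simp
qed

lemma real_cond_exp_G_t_eq_FE_t_on_tau_k_le_t:
  assumes "integrable M Y"
  shows "AE x in M. indicator tau_k_le_t x * real_cond_exp M G_t Y x
    = indicator tau_k_le_t x * real_cond_exp M FE_t Y x"
proof -
  interpret M: prob_space M by (rule PQ.prob_space_completion)
  obtain A where "A \<in> sets FE_t" "AE x in M. x \<in> tau_k_le_t \<longleftrightarrow> x \<in> A"
    using tau_k_le_t_AE_FE_t by blast
  from real_cond_exp_eq_on_common_trace[OF M.finite_measure_axioms subalgebra_G_t subalgebra_FE_t
      tau_k_le_t_in_G_t this FE_t_subset_trace_G_t G_t_subset_trace_FE_t assms]
  show ?thesis .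
qed

end

theorem mainTheorem3:
  fixes P :: "'a::polish_space measure" and Q :: "'b::polish_space measure"
    and F :: "real \<Rightarrow> 'a measure"
    and N :: nat
    and E :: "nat \<Rightarrow> 'b \<Rightarrow> real"
    and lam :: "nat \<Rightarrow> real \<Rightarrow> 'a \<Rightarrow> real"
    and Y :: "'a \<times> 'b \<Rightarrow> real"
    and k :: nat and t :: real
  assumes P: "prob_space P" and P_borel: "sets P = sets borel"
    and Q: "prob_space Q" and Q_borel: "sets Q = sets borel"
    and F_sub: "\<And>s. 0 \<le> s \<Longrightarrow> subalgebra P (F s)"
    and F_mono: "\<And>s r. 0 \<le> s \<Longrightarrow> s \<le> r \<Longrightarrow> sets (F s) \<subseteq> sets (F r)"
    and E_exp: "\<And>n. n \<in> {1..N} \<Longrightarrow> distributed Q lborel (E n) (exponential_density 1)"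
    and E_indep: "prob_space.indep_vars Q (\<lambda>_. borel) E {1..N}"
    and lam_meas: "\<And>n. n \<in> {1..N} \<Longrightarrow>
          (\<lambda>(s, w). lam n s w) \<in> borel_measurable (restrict_space borel {0..} \<Otimes>\<^sub>M P)"
    and lam_nonneg: "\<And>n s w. n \<in> {1..N} \<Longrightarrow> 0 \<le> s \<Longrightarrow> 0 \<le> lam n s w"
    and lam_adapted: "\<And>n s. n \<in> {1..N} \<Longrightarrow> 0 \<le> s \<Longrightarrow> lam n s \<in> borel_measurable (F s)"
    and lam_fin: "\<And>n. n \<in> {1..N} \<Longrightarrow>
          AE w in P. \<forall>r\<ge>0. (\<integral>\<^sup>+ s\<in>{0..r}. ennreal (lam n s w) \<partial>lborel) < \<infinity>"
    and lam_inf: "\<And>n. n \<in> {1..N} \<Longrightarrow>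
          AE w in P. (\<integral>\<^sup>+ s\<in>{0..}. ennreal (lam n s w) \<partial>lborel) = \<infinity>"
    and Y_meas: "Y \<in> borel_measurable (GN_measure P Q F)"
    and Y_int: "integrable (completion (P \<Otimes>\<^sub>M Q)) Y"
    and k: "k \<in> {1..N}" and t: "0 \<le> t"
  shows "AE x in completion (P \<Otimes>\<^sub>M Q).
           indicator {x. tau lam E k x \<le> t} x
             * real_cond_exp (completion (P \<Otimes>\<^sub>M Q)) (G_sigma P Q F lam E k t) Y x
         = indicator {x. tau lam E k x \<le> t} x
             * real_cond_exp (completion (P \<Otimes>\<^sub>M Q)) (FE_sigma P Q F E k t) Y x"
proof -
  interpret intensity_time_change P Q F N E lam k t
    by (rule intensity_time_change.intro) (fact assms)+
  show ?thesis by (rule real_cond_exp_G_t_eq_FE_t_on_tau_k_le_t[OF Y_int])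
qed

end
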